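(* Let $\rho:\mathbb{Z}\to[0,\infty)$ be a weight with finite moments, $f,g$ polynomials with $\deg f\le2$, $\deg g\le1$, $f(x+1)\rho(x+1)-f(x)\rho(x)=g(x)\rho(x)$ on $\mathbb{Z}$, and $\rho f$ vanishing at the end points of the support of $\rho$. Let $\{p_n\}$ be the monic orthogonal polynomials for $\rho$ with $\sum_xp_mp_n\rho=h_n\delta_{nm}$, $h_n>0$; let $\mathcal{A}_{\rm l}=g(x)T+f(x)(\Delta+\nabla)$, $c_n:=-\sum_xp_{n+1}(x)(\mathcal{A}_{\rm l}p_n)(x)\rho(x)$, $\omega(x)=f(x+1)\rho(x+1)$, and assume the Pfaffians $\mathrm{Pf}[\sum_x(x^i(x+1)^j-(x+1)^ix^j)\omega(x)]_{i,j=0}^{2n-1}$ are nonzero for all $n\ge1$. Let $Q_{2n+1}=p_{2n+1}$, $Q_{2n}=\sum_{l=0}^n\big(\prod_{j=l}^{n-1}c_{2j+1}/c_{2j}\big)p_{2l}$, $u_n=c_{2n}$, and for $N\ge1$ $$S_N(x,y)=\sum_{i=0}^{N-1}\frac{1}{u_i}\big(Q_{2i}(x)Q_{2i+1}(y)-Q_{2i}(y)Q_{2i+1}(x)\big).$$ Then, with $t_{2N,2N-2}:=-c_{2N-1}/c_{2N-2}$, $$\sum_{m=0}^{N-1}\frac{p_{2m}(x)p_{2m}(y)}{h_{2m}}+\sum_{m=0}^{N-1}\frac{p_{2m+1}(x)p_{2m+1}(y)}{h_{2m+1}}=\mathcal{A}^{(y)}_{\rm l}S_N(x,y)-\frac{t_{2N,2N-2}}{h_{2N}}p_{2N}(y)Q_{2N-2}(x),$$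 where $\mathcal{A}^{(y)}_{\rm l}$ denotes $\mathcal{A}_{\rm l}$ acting in the variable $y$.
   Context: $T\phi(x)=\phi(x+1)$, $\Delta\phi(x)=\phi(x+1)-\phi(x)$, $\nabla\phi(x)=\phi(x)-\phi(x-1)$. *)

theory Defs
  imports "HOL-Analysis.Analysis" "HOL-Computational_Algebra.Polynomial"
    "HOL-Combinatorics.Permutations"
begin

definition Al :: "real poly \<Rightarrow> real poly \<Rightarrow> (real \<Rightarrow> real) \<Rightarrow> real \<Rightarrow> real" where
  "Al f g \<phi> x = poly g x * \<phi> (x + 1)
      + poly f x * ((\<phi> (x + 1) - \<phi> x) + (\<phi> x - \<phi> (x - 1)))"

definition finite_moments :: "(int \<Rightarrow> real) \<Rightarrow> bool" where
  "finite_moments \<rho> \<longleftrightarrow> (\<forall>k::nat. (\<lambda>x::int. \<bar>real_of_int x\<bar> ^ k * \<rho> x) summable_on UNIV)"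

definition vanishes_at_endpoints :: "(int \<Rightarrow> real) \<Rightarrow> real poly \<Rightarrow> bool" where
  "vanishes_at_endpoints \<rho> f \<longleftrightarrow>
     (let S = {x. \<rho> x \<noteq> 0}; F = (\<lambda>x::int. poly f (real_of_int x) * \<rho> x) in
       (S \<noteq> {} \<and> bdd_above S \<longrightarrow> F (Sup S) = 0) \<and>
       (S \<noteq> {} \<and> bdd_below S \<longrightarrow> F (Inf S) = 0) \<and>
       (\<not> bdd_above S \<longrightarrow> (F \<longlongrightarrow> 0) at_top) \<and>
       (\<not> bdd_below S \<longrightarrow> (F \<longlongrightarrow> 0) at_bot))"

definition pfaffian :: "nat \<Rightarrow> (nat \<Rightarrow> nat \<Rightarrow> real) \<Rightarrow> real" where
  "pfaffian n A = (\<Sum>\<sigma> | \<sigma> permutes {0..<2*n}.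
       of_int (sign \<sigma>) * (\<Prod>i<n. A (\<sigma> (2*i)) (\<sigma> (2*i+1)))) / (2 ^ n * fact n)"

definition cc :: "real poly \<Rightarrow> real poly \<Rightarrow> (int \<Rightarrow> real) \<Rightarrow> (nat \<Rightarrow> real poly) \<Rightarrow> nat \<Rightarrow> real" where
  "cc f g \<rho> p n = - (\<Sum>\<^sub>\<infinity>x::int. poly (p (n+1)) (real_of_int x)
                         * Al f g (poly (p n)) (real_of_int x) * \<rho> x)"

definition QQ :: "real poly \<Rightarrow> real poly \<Rightarrow> (int \<Rightarrow> real) \<Rightarrow> (nat \<Rightarrow> real poly) \<Rightarrow> nat \<Rightarrow> real poly" where
  "QQ f g \<rho> p k = (if odd k then p k
      else (let n = k div 2 in
            \<Sum>l = 0..n. smult (\<Prod>j = l..<n. cc f g \<rho> p (2*j+1) / cc f g \<rho> p (2*j)) (p (2*l))))"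

definition SS :: "real poly \<Rightarrow> real poly \<Rightarrow> (int \<Rightarrow> real) \<Rightarrow> (nat \<Rightarrow> real poly) \<Rightarrow> nat \<Rightarrow> real \<Rightarrow> real \<Rightarrow> real" where
  "SS f g \<rho> p N x y = (\<Sum>i<N. (1 / cc f g \<rho> p (2*i)) *
      (poly (QQ f g \<rho> p (2*i)) x * poly (QQ f g \<rho> p (2*i+1)) y
       - poly (QQ f g \<rho> p (2*i)) y * poly (QQ f g \<rho> p (2*i+1)) x))"

end

theory Submission
  imports Defs
begin

text \<open>Summation by parts against the Pearson equation makes the lowering operator skew-adjoint for
  the weight: \<open>\<Sum>\<^sub>x (A\<^sub>l u)(x) w(x) \<rho>(x) = - B(u, w)\<close> for the antisymmetric form
  \<open>B(u, w) = \<Sum>\<^sub>x f(x) (u(x-1) w(x) - u(x) w(x-1)) \<rho>(x)\<close> (\<open>skew_form\<close>), whose matrix on monomials is the one in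
  the Pfaffian hypothesis. Together with orthogonality this gives
  \<open>A\<^sub>l p(n) = -(c(n)/h(n+1)) p(n+1) + (c(n-1)/h(n-1)) p(n-1)\<close>. The Pfaffian hypothesis forces
  \<open>c(2l) \<noteq> 0\<close>, and \<open>Q(2n)\<close> is exactly the combination of even \<open>p\<close>'s for which \<open>A\<^sub>l Q(2n)\<close>
  is a multiple of \<open>p(2n+1)\<close>. Applying \<open>A\<^sub>l\<close> to \<open>S\<^sub>N\<close> in \<open>y\<close> therefore leaves a sum which,
  by the recurrence \<open>Q(2n+2) = p(2n+2) + (c(2n+1)/c(2n)) Q(2n)\<close>, telescopes to the kernel up
  to the boundary term.\<close>

section \<open>Pfaffians\<close>

lemma permutes_pair_containing:
  fixes n k :: nat
  assumes \<sigma>: "\<sigma> permutes {0..<2*n}" and k: "k < 2*n"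
  obtains i where "i < n" and "\<sigma> (2*i) = k \<or> \<sigma> (2*i+1) = k"
    and "\<And>i'. i' \<noteq> i \<Longrightarrow> \<sigma> (2*i') \<noteq> k \<and> \<sigma> (2*i'+1) \<noteq> k"
proof
  let ?m = "inv \<sigma> k"
  have m: "\<sigma> ?m = k" using permutes_inverses(1)[OF \<sigma>] by simp
  have "?m < 2*n" using permutes_in_image[OF permutes_inv[OF \<sigma>]] k by simp
  then show "?m div 2 < n" by simp
  have "?m = 2*(?m div 2) \<or> ?m = 2*(?m div 2)+1" by presburger
  then show "\<sigma> (2*(?m div 2)) = k \<or> \<sigma> (2*(?m div 2)+1) = k" using m by metis
  fix i' assume "i' \<noteq> ?m div 2"
  then have "2*i' \<noteq> ?m" "2*i'+1 \<noteq> ?m" by auto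
  then have "\<sigma> (2*i') \<noteq> \<sigma> ?m" "\<sigma> (2*i'+1) \<noteq> \<sigma> ?m"
    using permutes_inj[OF \<sigma>] by (simp_all add: inj_eq)
  then show "\<sigma> (2*i') \<noteq> k \<and> \<sigma> (2*i'+1) \<noteq> k" using m by simp
qed

lemma pfaffian_linear_row:
  fixes A :: "nat \<Rightarrow> nat \<Rightarrow> real" and B :: "'s \<Rightarrow> nat \<Rightarrow> nat \<Rightarrow> real"
  assumes k: "k < 2*n" and S: "finite S"
    and off: "\<And>s i j. s \<in> S \<Longrightarrow> i < 2*n \<Longrightarrow> j < 2*n \<Longrightarrow> i \<noteq> k \<Longrightarrow> j \<noteq> k
      \<Longrightarrow> B s i j = A i j"
    and row: "\<And>j. j < 2*n \<Longrightarrow> j \<noteq> k \<Longrightarrow> A k j = (\<Sum>s\<in>S. a s * B s k j)"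
    and col: "\<And>i. i < 2*n \<Longrightarrow> i \<noteq> k \<Longrightarrow> A i k = (\<Sum>s\<in>S. a s * B s i k)"
  shows "pfaffian n A = (\<Sum>s\<in>S. a s * pfaffian n (B s))"
proof -
  have prod_eq: "(\<Prod>i<n. A (\<sigma> (2*i)) (\<sigma> (2*i+1))) = (\<Sum>s\<in>S. a s * (\<Prod>i<n. B s (\<sigma> (2*i)) (\<sigma> (2*i+1))))"
    if \<sigma>: "\<sigma> permutes {0..<2*n}" for \<sigma>
  proof -
    obtain i0 where i0: "i0 < n" and hit: "\<sigma> (2*i0) = k \<or> \<sigma> (2*i0+1) = k"
      and miss: "\<And>i. i \<noteq> i0 \<Longrightarrow> \<sigma> (2*i) \<noteq> k \<and> \<sigma> (2*i+1) \<noteq> k"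
      using permutes_pair_containing[OF \<sigma> k] by blast
    have img: "\<sigma> (2*i) < 2*n \<and> \<sigma> (2*i+1) < 2*n" if "i < n" for i
      using permutes_in_image[OF \<sigma>] that by simp
    have "\<sigma> (2*i0) \<noteq> \<sigma> (2*i0+1)" using permutes_inj[OF \<sigma>] by (simp add: inj_eq)
    then have pair: "A (\<sigma> (2*i0)) (\<sigma> (2*i0+1)) = (\<Sum>s\<in>S. a s * B s (\<sigma> (2*i0)) (\<sigma> (2*i0+1)))"
      using hit row col img[OF i0] by auto
    let ?R = "\<lambda>M. \<Prod>i\<in>{..<n}-{i0}. M (\<sigma> (2*i)) (\<sigma> (2*i+1))"
    have rest: "?R (B s) = ?R A" if "s \<in> S" for s
      using off[OF that] miss img by (intro prod.cong) auto
    have split: "(\<Prod>i<n. M (\<sigma> (2*i)) (\<sigma> (2*i+1))) = M (\<sigma> (2*i0)) (\<sigma> (2*i0+1)) * ?R M" for M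
      using i0 by (subst prod.remove[of _ i0]) auto
    show ?thesis
      unfolding split pair sum_distrib_right
    proof (intro sum.cong refl)
      fix s assume "s \<in> S"
      then show "a s * B s (\<sigma> (2*i0)) (\<sigma> (2*i0+1)) * ?R A
          = a s * (B s (\<sigma> (2*i0)) (\<sigma> (2*i0+1)) * ?R (B s))"
        by (simp only: rest mult.assoc)
    qed
  qed
  have "pfaffian n A = (\<Sum>\<sigma> | \<sigma> permutes {0..<2*n}. \<Sum>s\<in>S.
      a s * (of_int (sign \<sigma>) * (\<Prod>i<n. B s (\<sigma> (2*i)) (\<sigma> (2*i+1))))) / (2 ^ n * fact n)"
    unfolding pfaffian_def
  proof (intro arg_cong2[where f="(/)"] sum.cong refl)
    fix \<sigma> assume "\<sigma> \<in> {\<sigma>. \<sigma> permutes {0..<2*n}}"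
    then show "of_int (sign \<sigma>) * (\<Prod>i<n. A (\<sigma> (2*i)) (\<sigma> (2*i+1))) = (\<Sum>s\<in>S.
        a s * (of_int (sign \<sigma>) * (\<Prod>i<n. B s (\<sigma> (2*i)) (\<sigma> (2*i+1)))))"
      by (simp only: mem_Collect_eq prod_eq sum_distrib_left mult.left_commute)
  qed
  also have "\<dots> = (\<Sum>s\<in>S. a s * pfaffian n (B s))"
    unfolding pfaffian_def
    by (subst sum.swap) (simp add: sum_divide_distrib sum_distrib_left)
  finally show ?thesis .
qed

lemma pfaffian_eq_0_if_zero_row:
  fixes A :: "nat \<Rightarrow> nat \<Rightarrow> real"
  assumes "k < 2*n" and "\<And>j. j < 2*n \<Longrightarrow> j \<noteq> k \<Longrightarrow> A k j = 0"
    and "\<And>i. i < 2*n \<Longrightarrow> i \<noteq> k \<Longrightarrow> A i k = 0"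
  shows "pfaffian n A = 0"
  using pfaffian_linear_row[where S = "{}" and A = A and B = "\<lambda>_. A"] assms by simp

lemma pfaffian_eq_0_if_equal_rows:
  fixes A :: "nat \<Rightarrow> nat \<Rightarrow> real"
  assumes ab: "a < 2*n" "b < 2*n" "a \<noteq> b"
    and rows: "\<And>j. A a j = A b j" and cols: "\<And>i. A i a = A i b"
  shows "pfaffian n A = 0"
proof -
  let ?F = "\<lambda>\<sigma>. of_int (sign \<sigma>) * (\<Prod>i<n. A (\<sigma> (2*i)) (\<sigma> (2*i+1)))"
  define \<tau> where "\<tau> = Transposition.transpose a b"
  have \<tau>: "\<tau> permutes {0..<2*n}" unfolding \<tau>_def using ab by (intro permutes_swap_id) auto
  have sign_\<tau>: "sign \<tau> = -1" unfolding \<tau>_def using ab by (simp add: sign_swap_id)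
  have A_\<tau>: "A (\<tau> i) (\<tau> j) = A i j" for i j
    unfolding \<tau>_def using ab(3) rows cols by (simp add: Transposition.transpose_def)
  have "sum ?F {\<sigma>. \<sigma> permutes {0..<2*n}} = sum (\<lambda>\<sigma>. ?F (\<tau> \<circ> \<sigma>)) {\<sigma>. \<sigma> permutes {0..<2*n}}"
    by (rule setum_permutations_compose_left[OF \<tau>])
  also have "\<dots> = sum (\<lambda>\<sigma>. - ?F \<sigma>) {\<sigma>. \<sigma> permutes {0..<2*n}}"
  proof (intro sum.cong refl)
    fix \<sigma> assume "\<sigma> \<in> {\<sigma>. \<sigma> permutes {0..<2*n}}"
    then have "sign (\<tau> \<circ> \<sigma>) = sign \<tau> * sign \<sigma>"
      using \<tau> by (intro sign_compose) (auto intro: permutes_imp_permutation)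
    then show "?F (\<tau> \<circ> \<sigma>) = - ?F \<sigma>" by (simp add: sign_\<tau> A_\<tau>)
  qed
  finally show ?thesis unfolding pfaffian_def by (simp add: sum_negf)
qed

section \<open>The lowering operator on polynomials\<close>

definition poly_translate :: "'a::comm_ring_1 poly \<Rightarrow> 'a \<Rightarrow> 'a poly" where
  "poly_translate q a = q \<circ>\<^sub>p [:a, 1:]"

lemma poly_poly_translate [simp]: "poly (poly_translate q a) x = poly q (x + a)"
  unfolding poly_translate_def by (simp add: poly_pcompose add.commute)

lemma degree_poly_translate [simp]: "degree (poly_translate (q::'a::idom poly) a) = degree q"
  unfolding poly_translate_def by (simp add: degree_pcompose)

lemma lead_coeff_poly_translate [simp]:
  "lead_coeff (poly_translate (q::'a::idom poly) a) = lead_coeff q"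
  unfolding poly_translate_def by (subst lead_coeff_comp) auto

definition lowering_poly :: "real poly \<Rightarrow> real poly \<Rightarrow> real poly \<Rightarrow> real poly" where
  "lowering_poly f g q = g * poly_translate q 1 + f * (poly_translate q 1 - poly_translate q (-1))"

lemma Al_poly: "Al f g (poly q) = poly (lowering_poly f g q)"
  by (rule ext) (simp add: Al_def lowering_poly_def)

lemma lowering_poly_add: "lowering_poly f g (u + w) = lowering_poly f g u + lowering_poly f g w"
  by (rule poly_ext) (simp add: lowering_poly_def algebra_simps)

lemma lowering_poly_smult: "lowering_poly f g (smult a u) = smult a (lowering_poly f g u)"
  by (rule poly_ext) (simp add: lowering_poly_def algebra_simps)

lemma lowering_poly_lincomb:
  "finite I \<Longrightarrow> lowering_poly f g (\<Sum>i\<in>I. smult (a i) (u i))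
    = (\<Sum>i\<in>I. smult (a i) (lowering_poly f g (u i)))"
proof (induction I rule: finite_induct)
  case empty
  show ?case by (rule poly_ext) (simp add: lowering_poly_def)
qed (simp add: lowering_poly_add lowering_poly_smult)

lemma degree_lowering_poly:
  assumes "degree f \<le> 2" and "degree g \<le> 1"
  shows "degree (lowering_poly f g q) \<le> degree q + 1"
proof -
  let ?d = "poly_translate q 1 - poly_translate q (-1)"
  have "degree ?d \<le> degree q" by (rule degree_diff_le) simp_all
  moreover have "coeff ?d (degree q) = 0"
    using lead_coeff_poly_translate[of q 1] lead_coeff_poly_translate[of q "-1"] by simp
  ultimately have "?d = 0 \<or> degree ?d + 1 \<le> degree q"
    by (metis Suc_eq_plus1 le_neq_implies_less leading_coeff_0_iff less_eq_Suc_le)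
  then have "degree (f * ?d) \<le> degree q + 1"
    using degree_mult_le[of f ?d] assms(1) by auto
  moreover have "degree (g * poly_translate q 1) \<le> degree q + 1"
    using degree_mult_le[of g "poly_translate q 1"] assms(2) by simp
  ultimately show ?thesis
    unfolding lowering_poly_def by (intro degree_add_le)
qed

lemma Al_sum: "finite I \<Longrightarrow> Al f g (\<lambda>y. \<Sum>i\<in>I. \<phi> i y) z = (\<Sum>i\<in>I. Al f g (\<phi> i) z)"
  by (induction I rule: finite_induct) (simp_all add: Al_def algebra_simps)

lemma Al_diff_scaled: "Al f g (\<lambda>y. a * \<phi> y - b * \<psi> y) z = a * Al f g \<phi> z - b * Al f g \<psi> z"
  unfolding Al_def by (simp add: algebra_simps)

section \<open>Summation by parts\<close>

lemma summable_on_sum: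
  fixes F :: "'i \<Rightarrow> 'a \<Rightarrow> 'b::topological_comm_monoid_add"
  shows "finite I \<Longrightarrow> (\<And>i. i \<in> I \<Longrightarrow> F i summable_on A) \<Longrightarrow> (\<lambda>x. \<Sum>i\<in>I. F i x) summable_on A"
  by (induction I rule: finite_induct) (auto intro!: summable_on_add)

locale pearson_weight =
  fixes \<rho> :: "int \<Rightarrow> real" and f g :: "real poly"
  assumes rho_nonneg: "\<And>x. \<rho> x \<ge> 0"
    and moments: "finite_moments \<rho>"
    and deg_f: "degree f \<le> 2" and deg_g: "degree g \<le> 1"
    and pearson: "\<And>x::int. poly f (of_int (x+1)) * \<rho> (x+1) - poly f (of_int x) * \<rho> x
                        = poly g (of_int x) * \<rho> x"
begin

abbreviation A :: "real poly \<Rightarrow> real poly" where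
  "A \<equiv> lowering_poly f g"

definition wsum :: "real poly \<Rightarrow> real" where
  "wsum q = (\<Sum>\<^sub>\<infinity>x::int. poly q (of_int x) * \<rho> x)"

lemma summable_on_power_weight: "(\<lambda>x::int. of_int x ^ k * \<rho> x) summable_on UNIV"
proof -
  have "(\<lambda>x::int. \<bar>real_of_int x\<bar> ^ k * \<rho> x) summable_on UNIV"
    using moments unfolding finite_moments_def by blast
  moreover have "norm (of_int x ^ k * \<rho> x) = \<bar>real_of_int x\<bar> ^ k * \<rho> x" for x :: int
    using rho_nonneg[of x] by (simp add: abs_mult power_abs)
  ultimately have "(\<lambda>x::int. norm (of_int x ^ k * \<rho> x)) summable_on UNIV"
    by simp
  then show ?thesis
    by (rule summable_on_iff_abs_summable_on_real[THEN iffD2])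
qed

lemma summable_on_poly_weight: "(\<lambda>x::int. poly q (of_int x) * \<rho> x) summable_on UNIV"
proof -
  have "(\<lambda>x::int. \<Sum>i\<le>degree q. coeff q i * (of_int x ^ i * \<rho> x)) summable_on UNIV"
    by (intro summable_on_sum summable_on_cmult_right summable_on_power_weight) simp
  then show ?thesis
    by (simp add: poly_altdef sum_distrib_right mult.assoc)
qed

lemma wsum_add: "wsum (u + w) = wsum u + wsum w"
  unfolding wsum_def by (simp add: distrib_right infsum_add summable_on_poly_weight)

lemma wsum_smult: "wsum (smult a u) = a * wsum u"
  unfolding wsum_def by (simp add: mult.assoc infsum_cmult_right')

lemma wsum_uminus: "wsum (- u) = - wsum u"
  unfolding wsum_def by (simp add: infsum_uminus)

lemma wsum_diff: "wsum (u - w) = wsum u - wsum w"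
  using wsum_add[of u "- w"] wsum_uminus[of w] by simp

lemma wsum_0 [simp]: "wsum 0 = 0"
  unfolding wsum_def by simp

lemma wsum_sum: "finite I \<Longrightarrow> wsum (\<Sum>i\<in>I. u i) = (\<Sum>i\<in>I. wsum (u i))"
  by (induction I rule: finite_induct) (simp_all add: wsum_add)

lemma wsum_lincomb_mult:
  "finite I \<Longrightarrow> wsum ((\<Sum>i\<in>I. smult (a i) (u i)) * w) = (\<Sum>i\<in>I. a i * wsum (u i * w))"
  by (simp add: sum_distrib_right wsum_sum wsum_smult)

lemma wsum_pearson_shift: "wsum ((g + f) * poly_translate q 1) = wsum (f * q)"
proof -
  have "wsum ((g + f) * poly_translate q 1)
      = (\<Sum>\<^sub>\<infinity>x::int. poly (f * q) (of_int (x + 1)) * \<rho> (x + 1))"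
    unfolding wsum_def
  proof (rule infsum_cong)
    fix x :: int
    have "poly ((g + f) * poly_translate q 1) (of_int x) * \<rho> x
        = (poly g (of_int x) * \<rho> x + poly f (of_int x) * \<rho> x) * poly q (of_int x + 1)"
      by (simp add: algebra_simps)
    also have "poly g (of_int x) * \<rho> x + poly f (of_int x) * \<rho> x = poly f (of_int x + 1) * \<rho> (x + 1)"
      using pearson[of x] by simp
    finally show "poly ((g + f) * poly_translate q 1) (of_int x) * \<rho> x
        = poly (f * q) (of_int (x + 1)) * \<rho> (x + 1)"
      by simp
  qed
  also have "\<dots> = wsum (f * q)"
    unfolding wsum_def
    by (rule infsum_reindex_bij_betw[where f = "\<lambda>y. poly (f * q) (of_int y) * \<rho> y"])
      (rule bij_betwI[where g = "\<lambda>x. x - 1"]; simp)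
  finally show ?thesis .
qed

definition skew_form :: "real poly \<Rightarrow> real poly \<Rightarrow> real" where
  "skew_form u w = wsum (f * (poly_translate u (-1) * w - u * poly_translate w (-1)))"

lemma skew_form_antisym: "skew_form w u = - skew_form u w"
proof -
  have "f * (poly_translate w (-1) * u - w * poly_translate u (-1))
      = - (f * (poly_translate u (-1) * w - u * poly_translate w (-1)))"
    by (simp add: algebra_simps)
  then show ?thesis unfolding skew_form_def by (simp only: wsum_uminus)
qed

lemma wsum_lowering_mult: "wsum (A u * w) = - skew_form u w"
proof -
  have "A u * w = (g + f) * poly_translate (u * poly_translate w (-1)) 1
      - f * (poly_translate u (-1) * w)"
    by (rule poly_ext) (simp add: lowering_poly_def algebra_simps)
  then show ?thesis
    by (simp add: wsum_diff wsum_pearson_shift skew_form_def right_diff_distrib)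
qed

lemma wsum_lowering_mult_skew: "wsum (A u * w) = - wsum (A w * u)"
  using skew_form_antisym[of w u] by (simp add: wsum_lowering_mult)

lemma skew_form_lincomb_left:
  assumes "finite I"
  shows "skew_form (\<Sum>i\<in>I. smult (a i) (u i)) w = (\<Sum>i\<in>I. a i * skew_form (u i) w)"
proof -
  have "- skew_form (\<Sum>i\<in>I. smult (a i) (u i)) w = wsum (A (\<Sum>i\<in>I. smult (a i) (u i)) * w)"
    by (simp add: wsum_lowering_mult)
  also have "A (\<Sum>i\<in>I. smult (a i) (u i)) = (\<Sum>i\<in>I. smult (a i) (A (u i)))"
    using assms by (rule lowering_poly_lincomb)
  finally show ?thesis
    using assms by (simp add: wsum_lincomb_mult wsum_lowering_mult sum_negf)
qed

lemma skew_form_lincomb_right: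
  assumes "finite I"
  shows "skew_form w (\<Sum>i\<in>I. smult (a i) (u i)) = (\<Sum>i\<in>I. a i * skew_form w (u i))"
proof -
  have "skew_form w (\<Sum>i\<in>I. smult (a i) (u i)) = - (\<Sum>i\<in>I. a i * skew_form (u i) w)"
    by (simp only: skew_form_antisym[of w] skew_form_lincomb_left[OF assms])
  also have "\<dots> = (\<Sum>i\<in>I. a i * skew_form w (u i))"
    by (simp only: skew_form_antisym[of _ w] sum_negf[symmetric]) simp
  finally show ?thesis .
qed

end

section \<open>Orthogonal polynomials\<close>

lemma sum_telescope_linear_recurrence:
  fixes E Q W r :: "nat \<Rightarrow> 'a::comm_ring"
  assumes "Q 0 = E 0" and "\<And>i. Q (Suc i) = E (Suc i) + r i * Q i"
  shows "(\<Sum>i<Suc M. Q i * W i - r i * Q i * W (Suc i))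
    = (\<Sum>i<Suc M. E i * W i) - r M * Q M * W (Suc M)"
  by (induction M) (simp_all add: assms algebra_simps)

locale pearson_orthogonal_polys = pearson_weight +
  fixes p :: "nat \<Rightarrow> real poly" and h :: "nat \<Rightarrow> real"
  assumes monic: "\<And>n. lead_coeff (p n) = 1" and deg_p: "\<And>n. degree (p n) = n"
    and orth: "\<And>m n. ((\<lambda>x::int. poly (p m) (of_int x) * poly (p n) (of_int x) * \<rho> x)
                      has_sum (if m = n then h n else 0)) UNIV"
    and h_pos: "\<And>n. h n > 0"
begin

abbreviation c :: "nat \<Rightarrow> real" where
  "c \<equiv> cc f g \<rho> p"

abbreviation Q :: "nat \<Rightarrow> real poly" where
  "Q \<equiv> QQ f g \<rho> p"

lemma wsum_p_mult_p: "wsum (p m * p n) = (if m = n then h n else 0)"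
  unfolding wsum_def using orth[of m n] by (simp add: has_sum_iff)

lemma p_0: "p 0 = 1"
  using monic[of 0] deg_p[of 0] by (metis degree_0_id one_pCons)

lemma p_expansion: "degree q \<le> m \<Longrightarrow> \<exists>a. q = (\<Sum>j\<le>m. smult (a j) (p j))"
proof (induction m arbitrary: q)
  case 0
  then show ?case
    by (intro exI[of _ "\<lambda>_. coeff q 0"]) (simp add: p_0 degree_0_id)
next
  case (Suc m)
  define r where "r = q - smult (coeff q (Suc m)) (p (Suc m))"
  have "degree r \<le> Suc m"
    unfolding r_def using Suc.prems deg_p[of "Suc m"] by (intro degree_diff_le) auto
  moreover have "coeff r (Suc m) = 0"
    unfolding r_def using monic[of "Suc m"] deg_p[of "Suc m"] by simp
  ultimately have "degree r \<le> m"
    by (metis le_SucE leading_coeff_0_iff le0 degree_0 not_less_eq_eq le_antisym)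
  then obtain a where a: "r = (\<Sum>j\<le>m. smult (a j) (p j))" using Suc.IH by blast
  let ?a = "a(Suc m := coeff q (Suc m))"
  have "(\<Sum>j\<le>m. smult (?a j) (p j)) = (\<Sum>j\<le>m. smult (a j) (p j))"
    by (intro sum.cong) auto
  then have "q = (\<Sum>j\<le>Suc m. smult (?a j) (p j))"
    using a unfolding r_def by (simp add: algebra_simps)
  then show ?case by blast
qed

lemma wsum_p_mult_lower_degree: "degree r < n \<Longrightarrow> wsum (p n * r) = 0"
proof -
  assume r: "degree r < n"
  obtain a where a: "r = (\<Sum>j\<le>degree r. smult (a j) (p j))" using p_expansion by blast
  have "wsum (p n * r) = (\<Sum>j\<le>degree r. a j * wsum (p j * p n))"
    by (subst a) (simp add: mult.commute[of "p n"] wsum_lincomb_mult)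
  also have "\<dots> = 0" using r by (intro sum.neutral) (auto simp: wsum_p_mult_p)
  finally show ?thesis .
qed

lemma eq_0_if_orthogonal:
  assumes r: "degree r \<le> m" and orthogonal: "\<And>k. k \<le> m \<Longrightarrow> wsum (r * p k) = 0"
  shows "r = 0"
proof -
  obtain a where a: "r = (\<Sum>j\<le>m. smult (a j) (p j))" using p_expansion[OF r] by blast
  have ah: "a k * h k = 0" if k: "k \<le> m" for k
  proof -
    have "wsum (r * p k) = (\<Sum>j\<le>m. a j * wsum (p j * p k))"
      by (subst a) (simp add: wsum_lincomb_mult)
    also have "\<dots> = a k * h k"
      using k by (subst sum.remove[of _ k]) (auto simp: wsum_p_mult_p)
    finally show ?thesis using orthogonal[OF k] by simp
  qed
  have "a k = 0" if "k \<le> m" for k using ah[OF that] h_pos[of k] by simp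
  then show "r = 0" by (simp add: a)
qed

lemma cc_eq: "c n = - wsum (p (Suc n) * A (p n))"
  unfolding cc_def wsum_def Al_poly by (simp add: mult.assoc)

lemma wsum_lowering_p_mult_p:
  "wsum (A (p n) * p k) = (if k = n + 1 then - c n else if k + 1 = n then c k else 0)"
proof -
  have skew: "wsum (A (p n) * p k) = - wsum (A (p k) * p n)"
    by (rule wsum_lowering_mult_skew)
  have low: "wsum (A (p m) * p m') = 0" if "m + 1 < m'" for m m'
    using degree_lowering_poly[OF deg_f deg_g, of "p m"] deg_p[of m] that
    by (subst mult.commute) (intro wsum_p_mult_lower_degree; simp)
  consider "k = n + 1" | "k + 1 = n" | "k = n" | "k + 1 < n" | "n + 1 < k" by linarith
  then show ?thesis
  proof cases
    case 1
    then show ?thesis by (simp add: cc_eq mult.commute)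
  next
    case 2
    then have "wsum (A (p k) * p n) = - c k" by (simp add: cc_eq mult.commute)
    then show ?thesis using 2 skew by simp
  next
    case 3
    then show ?thesis using skew by simp
  qed (use skew low in auto)
qed

lemma lowering_p:
  "A (p n) = smult (- c n / h (n + 1)) (p (n + 1))
    + smult (if n = 0 then 0 else c (n - 1) / h (n - 1)) (p (n - 1))"
  (is "_ = smult ?\<alpha> _ + smult ?\<beta> _")
proof -
  let ?r = "A (p n) - smult ?\<alpha> (p (n + 1)) - smult ?\<beta> (p (n - 1))"
  have "degree ?r \<le> n + 1"
    using degree_lowering_poly[OF deg_f deg_g, of "p n"] deg_p
    by (intro degree_diff_le) (auto intro: order.trans[OF degree_smult_le])
  then have "?r = 0"
  proof (rule eq_0_if_orthogonal)
    fix k assume "k \<le> n + 1"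
    have "wsum (?r * p k)
        = wsum (A (p n) * p k) - ?\<alpha> * wsum (p (n + 1) * p k) - ?\<beta> * wsum (p (n - 1) * p k)"
      by (simp only: left_diff_distrib wsum_diff mult_smult_left wsum_smult)
    also have "\<dots> = 0"
      using h_pos[of "n + 1"] h_pos[of "n - 1"] \<open>k \<le> n + 1\<close>
      by (auto simp: wsum_p_mult_p wsum_lowering_p_mult_p)
    finally show "wsum (?r * p k) = 0" .
  qed
  then show ?thesis by (simp add: algebra_simps)
qed

lemma pfaffian_hypothesis_matrix_eq:
  "(\<lambda>i j. \<Sum>\<^sub>\<infinity>x::int. (of_int x ^ i * (of_int x + 1) ^ j - (of_int x + 1) ^ i * of_int x ^ j)
      * (poly f (of_int (x+1)) * \<rho> (x+1)))
    = (\<lambda>i j. skew_form (monom 1 i) (monom 1 j))"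
proof (intro ext)
  fix i j :: nat
  show "(\<Sum>\<^sub>\<infinity>x::int. (of_int x ^ i * (of_int x + 1) ^ j - (of_int x + 1) ^ i * of_int x ^ j)
      * (poly f (of_int (x+1)) * \<rho> (x+1))) = skew_form (monom 1 i) (monom 1 j)"
    unfolding skew_form_def wsum_def
    by (subst infsum_reindex_bij_betw[where g = "\<lambda>x. x + 1", symmetric])
      (auto intro: bij_betwI[where g = "\<lambda>x. x - 1"] intro!: infsum_cong simp: poly_monom algebra_simps)
qed

lemma pfaffian_skew_form_replace_monic:
  assumes k: "k < 2*n" and q: "degree q = k" "lead_coeff q = 1"
  shows "pfaffian n (\<lambda>i j. skew_form (((monom 1)(k := q)) i) (((monom 1)(k := q)) j))
    = pfaffian n (\<lambda>i j. skew_form (monom 1 i) (monom 1 j))"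
proof -
  let ?G = "\<lambda>s i j. skew_form (((monom 1)(k := monom 1 s)) i) (((monom 1)(k := monom 1 s)) j)"
  have q_eq: "(\<Sum>s\<le>k. smult (coeff q s) (monom 1 s)) = q"
    using poly_as_sum_of_monoms[of q] q by (simp add: smult_monom)
  have "skew_form q w = (\<Sum>s\<le>k. coeff q s * skew_form (monom 1 s) w)"
    and "skew_form w q = (\<Sum>s\<le>k. coeff q s * skew_form w (monom 1 s))" for w
    using skew_form_lincomb_left[where I = "{..k}" and a = "coeff q" and u = "monom 1" and w = w]
      skew_form_lincomb_right[where I = "{..k}" and a = "coeff q" and u = "monom 1" and w = w]
    by (simp_all add: q_eq)
  then have "pfaffian n (\<lambda>i j. skew_form (((monom 1)(k := q)) i) (((monom 1)(k := q)) j))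
      = (\<Sum>s\<le>k. coeff q s * pfaffian n (?G s))"
    by (intro pfaffian_linear_row[OF k finite_atMost]) simp_all
  also have "\<dots> = coeff q k * pfaffian n (?G k)"
  proof -
    have "pfaffian n (?G s) = 0" if "s < k" for s
      using that k by (intro pfaffian_eq_0_if_equal_rows[of s n k]) auto
    then show ?thesis by (subst sum.remove[of _ k]) (auto intro!: sum.neutral)
  qed
  finally show ?thesis using q by simp
qed

text \<open>If \<open>c(2l) = 0\<close>, then \<open>p(2l+1)\<close> is \<open>skew_form\<close>-orthogonal to every polynomial of degree
  \<open>\<le> 2l\<close>, so substituting it for \<open>x^(2l+1)\<close> produces a zero row in the moment matrix.\<close>
lemma cc_even_neq_0:
  assumes "pfaffian (Suc l) (\<lambda>i j. skew_form (monom 1 i) (monom 1 j)) \<noteq> 0"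
  shows "c (2*l) \<noteq> 0"
proof
  assume c0: "c (2*l) = 0"
  define k where "k = 2*l + 1"
  have k: "k < 2 * Suc l" unfolding k_def by simp
  have radical: "skew_form (p k) (monom 1 j) = 0" if "j < k" for j
  proof -
    have "skew_form (p k) (p m) = 0" if "m \<le> j" for m
      using wsum_lowering_mult[of "p k" "p m"] wsum_lowering_p_mult_p[of k m] c0 that \<open>j < k\<close>
      unfolding k_def by (cases "m = 2*l") auto
    moreover obtain a where "monom 1 j = (\<Sum>m\<le>j. smult (a m) (p m))"
      using p_expansion[of "monom 1 j" j] by (auto simp: degree_monom_eq)
    ultimately show ?thesis by (simp add: skew_form_lincomb_right)
  qed
  have "pfaffian (Suc l) (\<lambda>i j. skew_form (((monom 1)(k := p k)) i) (((monom 1)(k := p k)) j)) = 0"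
    using k radical skew_form_antisym[of "p k"]
    by (intro pfaffian_eq_0_if_zero_row[of k]) (auto simp: k_def)
  then show False
    using assms pfaffian_skew_form_replace_monic[OF k deg_p monic] by simp
qed

lemma QQ_odd: "Q (2*i + 1) = p (2*i + 1)"
  unfolding QQ_def by simp

lemma QQ_0: "Q 0 = p 0"
  unfolding QQ_def by simp

lemma QQ_Suc_even: "Q (2 * Suc i) = p (2*i + 2) + smult (c (2*i + 1) / c (2*i)) (Q (2*i))"
proof (rule poly_ext)
  fix z
  let ?r = "\<lambda>j. c (2*j + 1) / c (2*j)"
  have "poly (Q (2 * Suc i)) z
      = (\<Sum>l = 0..i. (\<Prod>j = l..<Suc i. ?r j) * poly (p (2*l)) z) + poly (p (2*i + 2)) z"
    unfolding QQ_def by (simp add: poly_sum sum.atLeast0_atMost_Suc)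
  also have "(\<Sum>l = 0..i. (\<Prod>j = l..<Suc i. ?r j) * poly (p (2*l)) z)
      = ?r i * (\<Sum>l = 0..i. (\<Prod>j = l..<i. ?r j) * poly (p (2*l)) z)"
    unfolding sum_distrib_left by (intro sum.cong) (auto simp: prod.atLeastLessThan_Suc)
  also have "(\<Sum>l = 0..i. (\<Prod>j = l..<i. ?r j) * poly (p (2*l)) z) = poly (Q (2*i)) z"
    unfolding QQ_def by (simp add: poly_sum)
  finally show "poly (Q (2 * Suc i)) z = poly (p (2*i + 2) + smult (?r i) (Q (2*i))) z"
    by simp
qed

lemma lowering_QQ_even:
  assumes "\<And>j. j < i \<Longrightarrow> c (2*j) \<noteq> 0"
  shows "A (Q (2*i)) = smult (- c (2*i) / h (2*i + 1)) (p (2*i + 1))"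
  using assms
proof (induction i)
  case 0
  show ?case by (simp add: QQ_0 lowering_p[of 0])
next
  case (Suc i)
  let ?r = "c (2*i + 1) / c (2*i)"
  have "?r * (- c (2*i) / h (2*i + 1)) = - (c (2*i + 1) / h (2*i + 1))"
    using Suc.prems[of i] by simp
  then have "A (Q (2 * Suc i)) = A (p (2*i + 2)) + smult (- (c (2*i + 1) / h (2*i + 1))) (p (2*i + 1))"
    using Suc by (simp only: QQ_Suc_even lowering_poly_add lowering_poly_smult smult_smult) simp
  also have "\<dots> = smult (- c (2 * Suc i) / h (2 * Suc i + 1)) (p (2 * Suc i + 1))"
    using lowering_p[of "2*i + 2"] by simp
  finally show ?case .
qed

lemma Al_SS:
  assumes c_even: "\<And>i. c (2*i) \<noteq> 0"
  shows "Al f g (SS f g \<rho> p N x) y = (\<Sum>i<N.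
      poly (Q (2*i)) x * (poly (p (2*i)) y / h (2*i))
      - c (2*i + 1) / c (2*i) * poly (Q (2*i)) x * (poly (p (2*i + 2)) y / h (2*i + 2))
      + poly (p (2*i + 1)) x * poly (p (2*i + 1)) y / h (2*i + 1))"
    (is "_ = ?rhs")
proof -
  have SS_eq: "SS f g \<rho> p N x = (\<lambda>y. \<Sum>i<N. (poly (Q (2*i)) x / c (2*i)) * poly (p (2*i + 1)) y
      - (poly (p (2*i + 1)) x / c (2*i)) * poly (Q (2*i)) y)"
    unfolding SS_def QQ_odd by (intro ext sum.cong refl) (simp add: algebra_simps)
  have A_odd: "poly (A (p (2*i + 1))) y
      = c (2*i) / h (2*i) * poly (p (2*i)) y - c (2*i + 1) / h (2*i + 2) * poly (p (2*i + 2)) y" for i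
    by (simp only: lowering_p[of "2*i + 1"]) simp
  have A_even: "poly (A (Q (2*i))) y = - (c (2*i) / h (2*i + 1)) * poly (p (2*i + 1)) y" for i
    using c_even by (simp add: lowering_QQ_even)
  have "Al f g (SS f g \<rho> p N x) y = (\<Sum>i<N. (poly (Q (2*i)) x / c (2*i)) * poly (A (p (2*i + 1))) y
      - (poly (p (2*i + 1)) x / c (2*i)) * poly (A (Q (2*i))) y)"
    by (simp only: SS_eq Al_sum[OF finite_lessThan] Al_diff_scaled Al_poly)
  also have "\<dots> = ?rhs"
    using c_even h_pos by (intro sum.cong refl) (simp only: A_odd A_even, simp add: field_simps)
  finally show ?thesis .
qed

lemma kernel_eq_Al_SS:
  assumes c_even: "\<And>i. c (2*i) \<noteq> 0"
  shows "(\<Sum>m<Suc M. poly (p (2*m)) x * poly (p (2*m)) y / h (2*m))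
      + (\<Sum>m<Suc M. poly (p (2*m+1)) x * poly (p (2*m+1)) y / h (2*m+1))
    = Al f g (SS f g \<rho> p (Suc M) x) y
      + c (2*M + 1) / c (2*M) * poly (Q (2*M)) x * (poly (p (2*M + 2)) y / h (2*M + 2))"
proof -
  have "(\<Sum>i<Suc M. poly (Q (2*i)) x * (poly (p (2*i)) y / h (2*i))
        - c (2*i + 1) / c (2*i) * poly (Q (2*i)) x * (poly (p (2*(Suc i))) y / h (2*(Suc i))))
      = (\<Sum>i<Suc M. poly (p (2*i)) x * (poly (p (2*i)) y / h (2*i)))
        - c (2*M + 1) / c (2*M) * poly (Q (2*M)) x * (poly (p (2*(Suc M))) y / h (2*(Suc M)))"
    by (rule sum_telescope_linear_recurrence[where Q = "\<lambda>i. poly (Q (2*i)) x"])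
      (simp add: QQ_0, subst QQ_Suc_even, simp)
  then show ?thesis
    by (simp add: Al_SS[OF c_even] sum.distrib)
qed

end

theorem mainTheorem5:
  fixes \<rho> :: "int \<Rightarrow> real" and f g :: "real poly"
    and p :: "nat \<Rightarrow> real poly" and h :: "nat \<Rightarrow> real" and N :: nat
  assumes rho_nonneg: "\<And>x. \<rho> x \<ge> 0"
    and moments: "finite_moments \<rho>"
    and deg_f: "degree f \<le> 2" and deg_g: "degree g \<le> 1"
    and pearson: "\<And>x::int. poly f (of_int (x+1)) * \<rho> (x+1) - poly f (of_int x) * \<rho> x
                        = poly g (of_int x) * \<rho> x"
    and boundary: "vanishes_at_endpoints \<rho> f"
    and monic: "\<And>n. lead_coeff (p n) = 1" and deg_p: "\<And>n. degree (p n) = n"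
    and orth: "\<And>m n. ((\<lambda>x::int. poly (p m) (of_int x) * poly (p n) (of_int x) * \<rho> x)
                      has_sum (if m = n then h n else 0)) UNIV"
    and h_pos: "\<And>n. h n > 0"
    and pfaff: "\<And>n. n \<ge> 1 \<Longrightarrow> pfaffian n (\<lambda>i j. \<Sum>\<^sub>\<infinity>x::int.
                 (of_int x ^ i * (of_int x + 1) ^ j - (of_int x + 1) ^ i * of_int x ^ j)
                 * (poly f (of_int (x+1)) * \<rho> (x+1))) \<noteq> 0"
    and N: "N \<ge> 1"
  shows "\<forall>x y::real.
     (\<Sum>m<N. poly (p (2*m)) x * poly (p (2*m)) y / h (2*m))
     + (\<Sum>m<N. poly (p (2*m+1)) x * poly (p (2*m+1)) y / h (2*m+1))
     = Al f g (\<lambda>y'. SS f g \<rho> p N x y') y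
       - ((- cc f g \<rho> p (2*N-1) / cc f g \<rho> p (2*N-2)) / h (2*N))
         * poly (p (2*N)) y * poly (QQ f g \<rho> p (2*N-2)) x"
proof -
  interpret pearson_orthogonal_polys \<rho> f g p h
    by unfold_locales (fact rho_nonneg moments deg_f deg_g pearson monic deg_p orth h_pos)+
  have c_even: "cc f g \<rho> p (2*i) \<noteq> 0" for i
    using cc_even_neq_0[of i] pfaff[of "Suc i", unfolded pfaffian_hypothesis_matrix_eq] by simp
  obtain M where M: "N = Suc M" using N by (cases N) auto
  then have "2*N - 1 = 2*M + 1" "2*N - 2 = 2*M" "2*N = 2*M + 2" by simp_all
  then show ?thesis
    unfolding M using kernel_eq_Al_SS[OF c_even, where M = M] by simp
qed

end
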